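(* In the connectivity graph model, a shape $S$ can be grown from a single node if and only if $S$ is a tree.
   Context: Shapes. Grid points are integer pairs $(x,y)$; two grid points are adjacent if they are at orthogonal (Manhattan) distance $1$. A shape $S=(V,E)$ is a finite connected graph whose nodes occupy distinct grid points and whose edges join only pairs of nodes occupying adjacent points; shapes are considered up to translation. Growth operations. One node, the anchor $u_0$, is stationary; other nodes move relative to it, and a tree is rooted at $u_0$. A growth operation on a node $u$ toward an adjacent grid point $p$ either (i) if $u$ has no edge to $p$, creates a new node $u'$ at $p$ with edge $uu'$; or (ii) if $p$ is occupied by a node $v$ with $uv\in E$, creates a new node $u'$ at $p$, replaces edge $uv$ by edges $uu',u'v$, and translates by one unit, along the axis of $uv$, the part of the tree hanging from whichever of $u,v$ is farther from $u_0$, away from the other endpoint. In one time step a set of operations is applied concurrently, each node receiving at most one operation and all operations having the same cardinal direction; the displacement of each node is the sum of the unit vectors contributed by the operations on its path to $u_0$. The set is collision-free if no two nodes collide during these motions or end at the same point. Growth processes (connectivity graph model). A growth process from an initial shape $S_0$ performs time steps $t=1,2,\dots$, each applying a collision-free set of growth operations to the current shape; no edges are deleted and no edges are created other than by the operations. It grows $S$ from $S_0$ in $t_f$ time steps if the shape obtained after step $t_f$ is $S$. *)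

theory Defs
  imports Complex_Main "HOL-Library.Product_Plus"
begin

type_synonym point = "int \<times> int"

definition grid_adj :: "point \<Rightarrow> point \<Rightarrow> bool" where
  "grid_adj p q \<longleftrightarrow> \<bar>fst p - fst q\<bar> + \<bar>snd p - snd q\<bar> = 1"

definition edge_rel :: "'a set set \<Rightarrow> ('a \<times> 'a) set" where
  "edge_rel E = {(x, y). {x, y} \<in> E}"

definition connected_graph :: "'a set \<Rightarrow> 'a set set \<Rightarrow> bool" where
  "connected_graph V E \<longleftrightarrow> (\<forall>p\<in>V. \<forall>q\<in>V. (p, q) \<in> (edge_rel E)\<^sup>*)"

definition is_shape :: "point set \<Rightarrow> point set set \<Rightarrow> bool" where
  "is_shape V E \<longleftrightarrow> finite V \<and> V \<noteq> {} \<and>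
     (\<forall>e\<in>E. \<exists>p q. e = {p, q} \<and> p \<in> V \<and> q \<in> V \<and> grid_adj p q) \<and>
     connected_graph V E"

definition has_cycle :: "'a set \<Rightarrow> 'a set set \<Rightarrow> bool" where
  "has_cycle V E \<longleftrightarrow> (\<exists>xs. 3 \<le> length xs \<and> distinct xs \<and> set xs \<subseteq> V \<and>
     (\<forall>i<length xs. {xs ! i, xs ! (Suc i mod length xs)} \<in> E))"

definition is_tree :: "'a set \<Rightarrow> 'a set set \<Rightarrow> bool" where
  "is_tree V E \<longleftrightarrow> connected_graph V E \<and> \<not> has_cycle V E"

definition translate_equiv :: "point set \<times> point set set \<Rightarrow> point set \<times> point set set \<Rightarrow> bool" where
  "translate_equiv S T \<longleftrightarrow> (\<exists>\<tau>::point.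
     fst T = (\<lambda>p. p + \<tau>) ` fst S \<and> snd T = (\<lambda>e. (\<lambda>p. p + \<tau>) ` e) ` snd S)"

text \<open>Configurations during a growth process: labelled nodes, their positions,
  edges between labels, and the anchor node.\<close>
record config =
  cV :: "nat set"
  cpos :: "nat \<Rightarrow> point"
  cE :: "nat set set"
  canchor :: nat

definition shape_of :: "config \<Rightarrow> point set \<times> point set set" where
  "shape_of c = (cpos c ` cV c, (\<lambda>e. cpos c ` e) ` cE c)"

definition single_node :: config where
  "single_node = \<lparr>cV = {0}, cpos = (\<lambda>_. (0, 0)), cE = {}, canchor = 0\<rparr>"

definition cardinal_dirs :: "point set" where
  "cardinal_dirs = {(1, 0), (-1, 0), (0, 1), (0, -1)}"

definition gdist :: "config \<Rightarrow> nat \<Rightarrow> nat" where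
  "gdist c w = (LEAST n. (canchor c, w) \<in> (edge_rel (cE c)) ^^ n)"

text \<open>Node w belongs to the part of the tree hanging from x (w = x, or every path
  from w to the anchor passes through x).\<close>
definition hangs_from :: "config \<Rightarrow> nat \<Rightarrow> nat \<Rightarrow> bool" where
  "hangs_from c x w \<longleftrightarrow> w \<in> cV c \<and>
     (w = x \<or> (canchor c, w) \<notin> (edge_rel (cE c) \<inter> ((cV c - {x}) \<times> (cV c - {x})))\<^sup>*)"

definition has_nbr :: "config \<Rightarrow> nat \<Rightarrow> point \<Rightarrow> bool" where
  "has_nbr c u d \<longleftrightarrow> (\<exists>v\<in>cV c. {u, v} \<in> cE c \<and> cpos c v = cpos c u + d)"

definition nbr :: "config \<Rightarrow> nat \<Rightarrow> point \<Rightarrow> nat" where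
  "nbr c u d = (SOME v. v \<in> cV c \<and> {u, v} \<in> cE c \<and> cpos c v = cpos c u + d)"

text \<open>Displacement of an existing node w caused by the set Ops of operations in direction d:
  each type-(ii) operation on edge uv translates the part hanging from the endpoint f
  farther from the anchor by one unit away from the other endpoint n.\<close>
definition disp :: "config \<Rightarrow> nat set \<Rightarrow> point \<Rightarrow> nat \<Rightarrow> point" where
  "disp c Ops d w = (\<Sum>u\<in>{u\<in>Ops. has_nbr c u d}.
      (let v = nbr c u d;
           (f, n) = (if gdist c u < gdist c v then (v, u) else (u, v))
       in if hangs_from c f w then cpos c f - cpos c n else 0))"

definition traj :: "point \<Rightarrow> point \<Rightarrow> real \<Rightarrow> real \<times> real" where
  "traj p D t = (of_int (fst p) + t * of_int (fst D), of_int (snd p) + t * of_int (snd D))"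

text \<open>One time step: a set Ops of nodes each receiving one growth operation, all in
  the same cardinal direction d; nw u is the new node created by the operation on u.
  Existing nodes move linearly by their displacement; the new node created by the
  operation on u emerges from u and ends one unit from u's final position in direction d.
  Collision-free: no two distinct nodes occupy the same point at any time in (0,1]
  (at time 0 a new node coincides with its creator).\<close>
definition growth_step :: "config \<Rightarrow> config \<Rightarrow> bool" where
  "growth_step c c' \<longleftrightarrow> (\<exists>d Ops nw.
     d \<in> cardinal_dirs \<and> Ops \<subseteq> cV c \<and> finite Ops \<and> inj_on nw Ops \<and> nw ` Ops \<inter> cV c = {} \<and>
     cV c' = cV c \<union> nw ` Ops \<and>
     canchor c' = canchor c \<and>
     (\<forall>w\<in>cV c. cpos c' w = cpos c w + disp c Ops d w) \<and>
     (\<forall>u\<in>Ops. cpos c' (nw u) = cpos c u + disp c Ops d u + d) \<and>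
     cE c' = (cE c - {{u, nbr c u d} | u. u \<in> Ops \<and> has_nbr c u d})
             \<union> {{u, nw u} | u. u \<in> Ops}
             \<union> {{nw u, nbr c u d} | u. u \<in> Ops \<and> has_nbr c u d} \<and>
     (let start = (\<lambda>w. if w \<in> cV c then cpos c w else cpos c (inv_into Ops nw w));
          move = (\<lambda>w. if w \<in> cV c then disp c Ops d w
                       else disp c Ops d (inv_into Ops nw w) + d)
      in \<forall>a\<in>cV c'. \<forall>b\<in>cV c'. a \<noteq> b \<longrightarrow>
           (\<forall>t::real. 0 < t \<and> t \<le> 1 \<longrightarrow> traj (start a) (move a) t \<noteq> traj (start b) (move b) t)))"

end

theory Submission
  imports Defs
begin

text \<open>
  Call a graph graded if its vertices carry real heights such that adjacent vertices have
  different heights and no vertex has two lower neighbours. A graded graph is a forest, since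
  the highest vertex of a cycle would have two lower neighbours. Growth operations preserve
  gradings: a type-(i) operation attaches a leaf, which is put above its parent, and a
  type-(ii) operation subdivides an edge by a node whose height is the average of the heights
  of the two endpoints. As the final positions of a collision-free step are distinct, every
  shape grown from a single node is a tree.

  Conversely, a tree shape with at least two nodes has a leaf (the start of a longest path).
  Removing it leaves a tree, which can be grown by induction, and the leaf is then attached
  back by a single type-(i) operation. This operation is collision-free because the new node
  only travels along one grid edge towards a free grid point.
\<close>

section \<open>Graded forests\<close>

definition graded_forest :: "'a set \<Rightarrow> 'a set set \<Rightarrow> bool" where
  "graded_forest V E \<longleftrightarrow> (\<exists>h :: 'a \<Rightarrow> real.
     (\<forall>e\<in>E. \<exists>a b. e = {a, b} \<and> a \<in> V \<and> b \<in> V \<and> h a \<noteq> h b) \<and>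
     (\<forall>x y z. {x, y} \<in> E \<longrightarrow> {x, z} \<in> E \<longrightarrow> h y < h x \<longrightarrow> h z < h x \<longrightarrow> y = z))"

lemma graded_forestI:
  fixes h :: "'a \<Rightarrow> real"
  assumes "\<And>e. e \<in> E \<Longrightarrow> \<exists>a b. e = {a, b} \<and> a \<in> V \<and> b \<in> V \<and> h a \<noteq> h b"
    and "\<And>x y z. {x, y} \<in> E \<Longrightarrow> {x, z} \<in> E \<Longrightarrow> h y < h x \<Longrightarrow> h z < h x \<Longrightarrow> y = z"
  shows "graded_forest V E"
  unfolding graded_forest_def using assms by blast

lemma graded_forestE:
  assumes "graded_forest V E"
  obtains h :: "'a \<Rightarrow> real"
  where "\<And>e. e \<in> E \<Longrightarrow> \<exists>a b. e = {a, b}"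
    and "\<And>x y. {x, y} \<in> E \<Longrightarrow> x \<in> V \<and> y \<in> V \<and> h x \<noteq> h y"
    and "\<And>x y z. {x, y} \<in> E \<Longrightarrow> {x, z} \<in> E \<Longrightarrow> h y < h x \<Longrightarrow> h z < h x \<Longrightarrow> y = z"
proof -
  obtain h :: "'a \<Rightarrow> real" where
    edges: "\<forall>e\<in>E. \<exists>a b. e = {a, b} \<and> a \<in> V \<and> b \<in> V \<and> h a \<noteq> h b"
    and lower: "\<forall>x y z. {x, y} \<in> E \<longrightarrow> {x, z} \<in> E \<longrightarrow> h y < h x \<longrightarrow> h z < h x \<longrightarrow> y = z"
    using assms unfolding graded_forest_def by blast
  show thesis
  proof (rule that)
    show "\<exists>a b. e = {a, b}" if "e \<in> E" for e
      using edges that by blast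
    show "x \<in> V \<and> y \<in> V \<and> h x \<noteq> h y" if "{x, y} \<in> E" for x y
      using edges that by (metis doubleton_eq_iff)
    show "y = z" if "{x, y} \<in> E" "{x, z} \<in> E" "h y < h x" "h z < h x" for x y z
      using lower that by blast
  qed
qed

lemma graded_forest_edge_subset: "graded_forest V E \<Longrightarrow> e \<in> E \<Longrightarrow> e \<subseteq> V"
  unfolding graded_forest_def by auto

lemma graded_forest_acyclic:
  assumes "graded_forest V E"
  shows "\<not> has_cycle V E"
proof
  assume "has_cycle V E"
  then obtain xs where len: "3 \<le> length xs" and dist: "distinct xs"
    and cyc: "\<And>i. i < length xs \<Longrightarrow> {xs ! i, xs ! (Suc i mod length xs)} \<in> E"
    unfolding has_cycle_def by blast
  obtain h :: "'a \<Rightarrow> real"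
    where edge: "\<And>x y. {x, y} \<in> E \<Longrightarrow> x \<in> V \<and> y \<in> V \<and> h x \<noteq> h y"
      and lower: "\<And>x y z. {x, y} \<in> E \<Longrightarrow> {x, z} \<in> E \<Longrightarrow> h y < h x \<Longrightarrow> h z < h x \<Longrightarrow> y = z"
    using assms by (elim graded_forestE) blast
  define n where "n = length xs"
  have "xs \<noteq> []" using len by (cases xs) auto
  then have "Max (h ` set xs) \<in> h ` set xs"
    by (intro Max_in) auto
  then obtain i where i: "i < n" and i_max: "h (xs ! i) = Max (h ` set xs)"
    by (auto simp: in_set_conv_nth n_def)
  have top: "h (xs ! j) \<le> h (xs ! i)" if "j < n" for j
    unfolding i_max using that by (auto simp: n_def intro!: Max_ge)
  define j where "j = (if Suc i = n then 0 else Suc i)"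
  define k where "k = (if i = 0 then n - 1 else i - 1)"
  have jk: "j < n" "k < n" "j \<noteq> i" "k \<noteq> i" "j \<noteq> k" "Suc i mod n = j" "Suc k mod n = i"
    using i len unfolding j_def k_def n_def by auto
  have edges: "{xs ! i, xs ! j} \<in> E" "{xs ! i, xs ! k} \<in> E"
    using cyc[of i] cyc[of k] i jk by (simp_all add: n_def insert_commute)
  have distinct_nbrs: "xs ! j \<noteq> xs ! k"
    using dist jk by (simp add: n_def nth_eq_iff_index_eq)
  have "h (xs ! j) < h (xs ! i)" "h (xs ! k) < h (xs ! i)"
    using top[of j] top[of k] jk edge[OF edges(1)] edge[OF edges(2)] by auto
  then show False
    using lower[OF edges] distinct_nbrs by blast
qed

lemma graded_forest_image:
  assumes forest: "graded_forest V E" and inj: "inj_on f V"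
  shows "graded_forest (f ` V) ((`) f ` E)"
proof -
  obtain h :: "'a \<Rightarrow> real"
    where shape: "\<And>e. e \<in> E \<Longrightarrow> \<exists>a b. e = {a, b}"
      and edge: "\<And>x y. {x, y} \<in> E \<Longrightarrow> x \<in> V \<and> y \<in> V \<and> h x \<noteq> h y"
      and lower: "\<And>x y z. {x, y} \<in> E \<Longrightarrow> {x, z} \<in> E \<Longrightarrow> h y < h x \<Longrightarrow> h z < h x \<Longrightarrow> y = z"
    using forest by (elim graded_forestE) blast
  define h' where "h' = h \<circ> inv_into V f"
  have h'_f: "h' (f a) = h a" if "a \<in> V" for a
    using inj that by (simp add: h'_def)
  have pull: "\<exists>a b. p = f a \<and> q = f b \<and> {a, b} \<in> E" if pq: "{p, q} \<in> (`) f ` E" for p q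
  proof -
    obtain e where "e \<in> E" "{p, q} = f ` e" using pq by blast
    moreover obtain a b where "e = {a, b}" using shape[OF \<open>e \<in> E\<close>] by blast
    ultimately show ?thesis by (auto simp: doubleton_eq_iff) (metis insert_commute)
  qed
  show ?thesis
  proof (rule graded_forestI[of _ _ h'])
    fix e assume "e \<in> (`) f ` E"
    then obtain a b where ab: "f ` {a, b} = e" "{a, b} \<in> E"
      using shape by blast
    then show "\<exists>p q. e = {p, q} \<and> p \<in> f ` V \<and> q \<in> f ` V \<and> h' p \<noteq> h' q"
      using h'_f edge[OF ab(2)] by (intro exI[of _ "f a"] exI[of _ "f b"]) auto
  next
    fix p q r
    assume pq: "{p, q} \<in> (`) f ` E" and pr: "{p, r} \<in> (`) f ` E"
      and below: "h' q < h' p" "h' r < h' p"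
    obtain a b where ab: "p = f a" "q = f b" "{a, b} \<in> E" using pull[OF pq] by blast
    obtain a' c where ac: "p = f a'" "r = f c" "{a', c} \<in> E" using pull[OF pr] by blast
    have V: "a \<in> V" "b \<in> V" "a' \<in> V" "c \<in> V"
      using edge[OF ab(3)] edge[OF ac(3)] by blast+
    then have "a' = a" using ab(1) ac(1) inj by (metis inj_onD)
    then show "q = r"
      using lower[OF ab(3)] ac below ab V h'_f by auto
  qed
qed

context
  fixes V :: "'a set" and E :: "'a set set" and h :: "'a \<Rightarrow> real"
    and L :: "'a set" and nw :: "'a \<Rightarrow> 'a"
  assumes shape: "\<And>e. e \<in> E \<Longrightarrow> \<exists>a b. e = {a, b}"
    and edge: "\<And>x y. {x, y} \<in> E \<Longrightarrow> x \<in> V \<and> y \<in> V \<and> h x \<noteq> h y"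
    and lower: "\<And>x y z. {x, y} \<in> E \<Longrightarrow> {x, z} \<in> E \<Longrightarrow> h y < h x \<Longrightarrow> h z < h x \<Longrightarrow> y = z"
    and leaves: "L \<subseteq> V" and inj: "inj_on nw L" and fresh: "nw ` L \<inter> V = {}"
begin

definition leaf_height :: "'a \<Rightarrow> real" where
  "leaf_height w = (if w \<in> nw ` L then h (inv_into L nw w) + 1 else h w)"

lemma leaf_height_old: "x \<in> V \<Longrightarrow> leaf_height x = h x"
  using fresh by (auto simp: leaf_height_def)

lemma leaf_height_new: "u \<in> L \<Longrightarrow> leaf_height (nw u) = h u + 1"
  using inj by (simp add: leaf_height_def)

lemma leaf_edges_cases:
  "{x, y} \<in> E \<union> {{u, nw u} | u. u \<in> L} \<Longrightarrow>
    {x, y} \<in> E \<or> (x \<in> L \<and> y = nw x) \<or> (y \<in> L \<and> x = nw y)"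
  by (auto simp: doubleton_eq_iff)

lemma leaf_edge_heights:
  assumes "e \<in> E \<union> {{u, nw u} | u. u \<in> L}"
  shows "\<exists>a b. e = {a, b} \<and> a \<in> V \<union> nw ` L \<and> b \<in> V \<union> nw ` L \<and> leaf_height a \<noteq> leaf_height b"
proof -
  consider a b where "e = {a, b}" "{a, b} \<in> E" | u where "u \<in> L" "e = {u, nw u}"
    using assms shape by blast
  then show ?thesis
  proof cases
    case 1
    then show ?thesis using edge[OF 1(2)] leaf_height_old by (intro exI[of _ a] exI[of _ b]) auto
  next
    case 2
    then show ?thesis
      using leaves leaf_height_old leaf_height_new by (intro exI[of _ u] exI[of _ "nw u"]) force
  qed
qed

lemma leaf_lower_unique:
  assumes xy: "{x, y} \<in> E \<union> {{u, nw u} | u. u \<in> L}"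
    and xz: "{x, z} \<in> E \<union> {{u, nw u} | u. u \<in> L}"
    and below: "leaf_height y < leaf_height x" "leaf_height z < leaf_height x"
  shows "y = z"
proof (cases "x \<in> V")
  case True
  then have "{x, y} \<in> E" "{x, z} \<in> E"
    using leaf_edges_cases[OF xy] leaf_edges_cases[OF xz] below fresh leaf_height_old leaf_height_new
    by auto
  with below show ?thesis
    using lower edge leaf_height_old by (metis (no_types, lifting))
next
  case False
  then show ?thesis
    using leaf_edges_cases[OF xy] leaf_edges_cases[OF xz] edge leaves inj by (auto dest: inj_onD)
qed

lemma graded_forest_leaf_edges: "graded_forest (V \<union> nw ` L) (E \<union> {{u, nw u} | u. u \<in> L})"
  using leaf_edge_heights leaf_lower_unique by (rule graded_forestI)

end

lemma graded_forest_attach_leaves: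
  assumes forest: "graded_forest V E" and "L \<subseteq> V" and "inj_on nw L" and "nw ` L \<inter> V = {}"
  shows "graded_forest (V \<union> nw ` L) (E \<union> {{u, nw u} | u. u \<in> L})"
  using forest
proof (rule graded_forestE)
  fix h :: "'a \<Rightarrow> real"
  assume "\<And>e. e \<in> E \<Longrightarrow> \<exists>a b. e = {a, b}"
    and "\<And>x y. {x, y} \<in> E \<Longrightarrow> x \<in> V \<and> y \<in> V \<and> h x \<noteq> h y"
    and "\<And>x y z. {x, y} \<in> E \<Longrightarrow> {x, z} \<in> E \<Longrightarrow> h y < h x \<Longrightarrow> h z < h x \<Longrightarrow> y = z"
  then show ?thesis using assms(2-) by (rule graded_forest_leaf_edges)
qed

context
  fixes V :: "'a set" and E :: "'a set set" and h :: "'a \<Rightarrow> real"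
    and S :: "'a set" and v nw :: "'a \<Rightarrow> 'a"
  assumes shape: "\<And>e. e \<in> E \<Longrightarrow> \<exists>a b. e = {a, b}"
    and edge: "\<And>x y. {x, y} \<in> E \<Longrightarrow> x \<in> V \<and> y \<in> V \<and> h x \<noteq> h y"
    and lower: "\<And>x y z. {x, y} \<in> E \<Longrightarrow> {x, z} \<in> E \<Longrightarrow> h y < h x \<Longrightarrow> h z < h x \<Longrightarrow> y = z"
    and subdivided: "\<And>u. u \<in> S \<Longrightarrow> {u, v u} \<in> E"
    and distinct_edges: "inj_on (\<lambda>u. {u, v u}) S"
    and inj: "inj_on nw S" and fresh: "nw ` S \<inter> V = {}"
begin

abbreviation subdivided_edges :: "'a set set" where
  "subdivided_edges \<equiv>
     (E - {{u, v u} | u. u \<in> S}) \<union> {{u, nw u} | u. u \<in> S} \<union> {{nw u, v u} | u. u \<in> S}"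

definition subdivision_height :: "'a \<Rightarrow> real" where
  "subdivision_height w =
     (if w \<in> nw ` S then (h (inv_into S nw w) + h (v (inv_into S nw w))) / 2 else h w)"

definition subdivision_node :: "'a set \<Rightarrow> 'a" where
  "subdivision_node e = nw (inv_into S (\<lambda>u. {u, v u}) e)"

lemma subdivided_ends: "u \<in> S \<Longrightarrow> u \<in> V \<and> v u \<in> V \<and> h u \<noteq> h (v u)"
  using edge subdivided by blast

lemma subdivision_height_old: "x \<in> V \<Longrightarrow> subdivision_height x = h x"
  using fresh by (auto simp: subdivision_height_def)

lemma subdivision_height_new: "u \<in> S \<Longrightarrow> subdivision_height (nw u) = (h u + h (v u)) / 2"
  using inj by (simp add: subdivision_height_def)

lemma subdivision_node_edge: "u \<in> S \<Longrightarrow> subdivision_node {u, v u} = nw u"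
  using inv_into_f_f[OF distinct_edges] by (simp add: subdivision_node_def)

lemma subdivided_edges_cases:
  assumes "{x, y} \<in> subdivided_edges"
  shows "({x, y} \<in> E \<and> {x, y} \<notin> {{u, v u} | u. u \<in> S})
    \<or> (\<exists>u\<in>S. (x = u \<or> x = v u) \<and> y = nw u) \<or> (\<exists>u\<in>S. x = nw u \<and> (y = u \<or> y = v u))"
proof -
  have "{x, y} \<in> E - {{u, v u} | u. u \<in> S} \<or> (\<exists>u\<in>S. {x, y} = {u, nw u} \<or> {x, y} = {nw u, v u})"
    using assms by blast
  then show ?thesis by (auto simp: doubleton_eq_iff)
qed

lemma subdivided_edge_heights:
  assumes "e \<in> subdivided_edges"
  shows "\<exists>a b. e = {a, b} \<and> a \<in> V \<union> nw ` S \<and> b \<in> V \<union> nw ` S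
    \<and> subdivision_height a \<noteq> subdivision_height b"
proof -
  consider "e \<in> E" | u where "u \<in> S" "e = {u, nw u}" | u where "u \<in> S" "e = {nw u, v u}"
    using assms by blast
  then show ?thesis
  proof cases
    case 1
    then obtain a b where "e = {a, b}" "a \<in> V" "b \<in> V" "h a \<noteq> h b" using shape edge by blast
    then show ?thesis using subdivision_height_old by (intro exI[of _ a] exI[of _ b]) auto
  next
    case 2
    then have "subdivision_height u \<noteq> subdivision_height (nw u)"
      using subdivision_height_new[of u] subdivision_height_old[of u] subdivided_ends[of u]
      by (auto simp: field_simps)
    with 2 subdivided_ends show ?thesis by (intro exI[of _ u] exI[of _ "nw u"] conjI) auto
  next
    case 3
    then have "subdivision_height (nw u) \<noteq> subdivision_height (v u)"
      using subdivision_height_new[of u] subdivision_height_old[of "v u"] subdivided_ends[of u]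
      by (auto simp: field_simps)
    with 3 subdivided_ends show ?thesis by (intro exI[of _ "nw u"] exI[of _ "v u"] conjI) auto
  qed
qed

lemma subdivided_lower_nbr_old:
  assumes x: "x \<in> V" and xy: "{x, y} \<in> subdivided_edges"
    and below: "subdivision_height y < subdivision_height x"
  obtains b where "{x, b} \<in> E" "h b < h x"
    "y = (if {x, b} \<in> {{u, v u} | u. u \<in> S} then subdivision_node {x, b} else b)"
proof -
  have "x \<notin> nw ` S" using x fresh by blast
  then consider "{x, y} \<in> E" "{x, y} \<notin> {{u, v u} | u. u \<in> S}"
    | u where "u \<in> S" "x = u" "y = nw u" | u where "u \<in> S" "x = v u" "y = nw u"
    using subdivided_edges_cases[OF xy] by blast
  then show thesis
  proof cases
    case 1
    then have "h y < h x" using below x edge subdivision_height_old by simp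
    with 1 show thesis by (intro that) auto
  next
    case 2
    then have "h (v u) < h x" using below x subdivision_height_new subdivision_height_old by simp
    with 2 show thesis using subdivided subdivision_node_edge by (intro that[of "v u"]) auto
  next
    case 3
    then have "h u < h x" using below x subdivision_height_new subdivision_height_old by simp
    moreover have "{x, u} = {u, v u}" using 3 by (simp add: insert_commute)
    ultimately show thesis using 3 subdivided subdivision_node_edge by (intro that[of u]) auto
  qed
qed

lemma subdivided_nbrs_new:
  assumes "x \<notin> V" "{x, y} \<in> subdivided_edges"
  obtains u where "u \<in> S" "x = nw u" "y = u \<or> y = v u"
proof -
  have "{x, y} \<notin> E" using assms(1) edge by blast
  moreover have "x \<noteq> u \<and> x \<noteq> v u" if "u \<in> S" for u using assms(1) subdivided_ends[OF that] by blast
  ultimately show thesis using subdivided_edges_cases[OF assms(2)] that by blast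
qed

lemma subdivided_lower_unique:
  assumes xy: "{x, y} \<in> subdivided_edges" and xz: "{x, z} \<in> subdivided_edges"
    and below: "subdivision_height y < subdivision_height x" "subdivision_height z < subdivision_height x"
  shows "y = z"
proof (cases "x \<in> V")
  case True
  obtain b where b: "{x, b} \<in> E" "h b < h x"
    "y = (if {x, b} \<in> {{u, v u} | u. u \<in> S} then subdivision_node {x, b} else b)"
    using subdivided_lower_nbr_old[OF True xy below(1)] .
  obtain b' where b': "{x, b'} \<in> E" "h b' < h x"
    "z = (if {x, b'} \<in> {{u, v u} | u. u \<in> S} then subdivision_node {x, b'} else b')"
    using subdivided_lower_nbr_old[OF True xz below(2)] .
  have "b = b'" using lower[OF b(1) b'(1) b(2) b'(2)] .
  then show ?thesis unfolding b(3) b'(3) by (simp only:)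
next
  case False
  obtain u where u: "u \<in> S" "x = nw u" "y = u \<or> y = v u"
    using subdivided_nbrs_new[OF False xy] .
  obtain u' where u': "u' \<in> S" "x = nw u'" "z = u' \<or> z = v u'"
    using subdivided_nbrs_new[OF False xz] .
  have "u' = u" using inj_onD[OF inj _ u'(1) u(1)] u(2) u'(2) by simp
  have "h y < (h u + h (v u)) / 2" "h z < (h u + h (v u)) / 2"
    using below u u' \<open>u' = u\<close> subdivided_ends[OF u(1)] subdivision_height_new[OF u(1)]
      subdivision_height_old by auto
  then show ?thesis using u(3) u'(3) \<open>u' = u\<close> by auto
qed

lemma graded_forest_subdivided_edges: "graded_forest (V \<union> nw ` S) subdivided_edges"
  using subdivided_edge_heights subdivided_lower_unique by (rule graded_forestI)

end

lemma graded_forest_subdivide: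
  assumes forest: "graded_forest V E" and "\<And>u. u \<in> S \<Longrightarrow> {u, v u} \<in> E"
    and "inj_on (\<lambda>u. {u, v u}) S" and "inj_on nw S" and "nw ` S \<inter> V = {}"
  shows "graded_forest (V \<union> nw ` S)
    ((E - {{u, v u} | u. u \<in> S}) \<union> {{u, nw u} | u. u \<in> S} \<union> {{nw u, v u} | u. u \<in> S})"
  using forest
proof (rule graded_forestE)
  fix h :: "'a \<Rightarrow> real"
  assume "\<And>e. e \<in> E \<Longrightarrow> \<exists>a b. e = {a, b}"
    and "\<And>x y. {x, y} \<in> E \<Longrightarrow> x \<in> V \<and> y \<in> V \<and> h x \<noteq> h y"
    and "\<And>x y z. {x, y} \<in> E \<Longrightarrow> {x, z} \<in> E \<Longrightarrow> h y < h x \<Longrightarrow> h z < h x \<Longrightarrow> y = z"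
  then show ?thesis using assms(2-) by (rule graded_forest_subdivided_edges)
qed

section \<open>Growth steps preserve graded forests\<close>

lemma cardinal_dir_double_nonzero: "d \<in> cardinal_dirs \<Longrightarrow> d + d \<noteq> 0"
  unfolding cardinal_dirs_def by (auto simp: prod_eq_iff)

lemma has_nbr_nbr:
  assumes "has_nbr c u d"
  shows "nbr c u d \<in> cV c \<and> {u, nbr c u d} \<in> cE c \<and> cpos c (nbr c u d) = cpos c u + d"
  using assms unfolding has_nbr_def nbr_def by (rule someI2_bex) blast

lemma inj_on_nbr_edge:
  assumes "d \<in> cardinal_dirs"
  shows "inj_on (\<lambda>u. {u, nbr c u d}) {u \<in> Ops. has_nbr c u d}"
proof (rule inj_onI, rule ccontr)
  fix u u' assume "u \<in> {u \<in> Ops. has_nbr c u d}" "u' \<in> {u \<in> Ops. has_nbr c u d}"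
    and same: "{u, nbr c u d} = {u', nbr c u' d}" and "u \<noteq> u'"
  then have "u' = nbr c u d" "u = nbr c u' d"
    and "cpos c (nbr c u d) = cpos c u + d" "cpos c (nbr c u' d) = cpos c u' + d"
    using has_nbr_nbr by (auto simp: doubleton_eq_iff)
  then have "cpos c u + d + d = cpos c u" by simp
  then show False using cardinal_dir_double_nonzero[OF assms] by (simp add: add.assoc)
qed

lemma traj_one_eq_iff: "traj p D 1 = traj q D' 1 \<longleftrightarrow> p + D = q + D'"
  by (auto simp: traj_def prod_eq_iff)

lemma growth_step_inj_pos:
  assumes "growth_step c c'"
  shows "inj_on (cpos c') (cV c')"
proof -
  obtain d Ops nw where V': "cV c' = cV c \<union> nw ` Ops" and inj: "inj_on nw Ops"
    and pos_old: "\<forall>w\<in>cV c. cpos c' w = cpos c w + disp c Ops d w"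
    and pos_new: "\<forall>u\<in>Ops. cpos c' (nw u) = cpos c u + disp c Ops d u + d"
    and collision_free: "let start = (\<lambda>w. if w \<in> cV c then cpos c w else cpos c (inv_into Ops nw w));
          move = (\<lambda>w. if w \<in> cV c then disp c Ops d w else disp c Ops d (inv_into Ops nw w) + d)
      in \<forall>a\<in>cV c'. \<forall>b\<in>cV c'. a \<noteq> b \<longrightarrow>
           (\<forall>t::real. 0 < t \<and> t \<le> 1 \<longrightarrow> traj (start a) (move a) t \<noteq> traj (start b) (move b) t)"
    using assms unfolding growth_step_def by (elim exE conjE) (rule that; assumption)
  define start where "start = (\<lambda>w. if w \<in> cV c then cpos c w else cpos c (inv_into Ops nw w))"
  define move where
    "move = (\<lambda>w. if w \<in> cV c then disp c Ops d w else disp c Ops d (inv_into Ops nw w) + d)"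
  have end_pos: "cpos c' w = start w + move w" if "w \<in> cV c'" for w
    using that V' pos_old pos_new inj by (auto simp: start_def move_def add.assoc)
  show ?thesis
  proof (rule inj_onI, rule ccontr)
    fix a b assume a: "a \<in> cV c'" and b: "b \<in> cV c'" and "cpos c' a = cpos c' b" "a \<noteq> b"
    moreover have "traj (start a) (move a) 1 \<noteq> traj (start b) (move b) 1"
      using collision_free a b \<open>a \<noteq> b\<close>
      unfolding Let_def start_def[symmetric] move_def[symmetric] by simp
    ultimately show False using end_pos[OF a] end_pos[OF b] traj_one_eq_iff by simp
  qed
qed

lemma growth_step_graded_forest:
  assumes forest: "graded_forest (cV c) (cE c)" and step: "growth_step c c'"
  shows "graded_forest (cV c') (cE c')"
proof -
  obtain d Ops nw where d: "d \<in> cardinal_dirs" and Ops: "Ops \<subseteq> cV c" and inj: "inj_on nw Ops"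
    and fresh: "nw ` Ops \<inter> cV c = {}" and V': "cV c' = cV c \<union> nw ` Ops"
    and E': "cE c' = (cE c - {{u, nbr c u d} | u. u \<in> Ops \<and> has_nbr c u d})
             \<union> {{u, nw u} | u. u \<in> Ops}
             \<union> {{nw u, nbr c u d} | u. u \<in> Ops \<and> has_nbr c u d}"
    using step unfolding growth_step_def by (elim exE conjE) (rule that; assumption)
  define S where "S = {u \<in> Ops. has_nbr c u d}"
  define v where "v u = nbr c u d" for u
  have "graded_forest (cV c \<union> nw ` S)
      ((cE c - {{u, v u} | u. u \<in> S}) \<union> {{u, nw u} | u. u \<in> S} \<union> {{nw u, v u} | u. u \<in> S})"
  proof (rule graded_forest_subdivide[OF forest])
    show "{u, v u} \<in> cE c" if "u \<in> S" for u
      using that has_nbr_nbr by (simp add: S_def v_def)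
    show "inj_on (\<lambda>u. {u, v u}) S"
      unfolding S_def v_def using d by (rule inj_on_nbr_edge)
    show "inj_on nw S" "nw ` S \<inter> cV c = {}"
      using inj fresh by (auto simp: S_def intro: inj_on_subset)
  qed
  then have "graded_forest (cV c \<union> nw ` S \<union> nw ` (Ops - S))
      ((cE c - {{u, v u} | u. u \<in> S}) \<union> {{u, nw u} | u. u \<in> S} \<union> {{nw u, v u} | u. u \<in> S}
       \<union> {{u, nw u} | u. u \<in> Ops - S})"
  proof (rule graded_forest_attach_leaves)
    show "Ops - S \<subseteq> cV c \<union> nw ` S" "inj_on nw (Ops - S)"
      using Ops inj by (auto intro: inj_on_subset)
    show "nw ` (Ops - S) \<inter> (cV c \<union> nw ` S) = {}"
      using fresh inj by (auto simp: S_def dest: inj_onD)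
  qed
  moreover have "cV c \<union> nw ` S \<union> nw ` (Ops - S) = cV c'"
    using V' by (auto simp: S_def)
  moreover have "(cE c - {{u, v u} | u. u \<in> S}) \<union> {{u, nw u} | u. u \<in> S} \<union> {{nw u, v u} | u. u \<in> S}
       \<union> {{u, nw u} | u. u \<in> Ops - S} = cE c'"
    unfolding E' S_def v_def by blast
  ultimately show ?thesis by simp
qed

definition forest_config :: "config \<Rightarrow> bool" where
  "forest_config c \<longleftrightarrow> finite (cV c) \<and> inj_on (cpos c) (cV c) \<and> graded_forest (cV c) (cE c)"

lemma forest_config_single_node: "forest_config single_node"
  unfolding forest_config_def single_node_def by (auto intro: graded_forestI)

lemma forest_config_growth_step:
  assumes "forest_config c" and step: "growth_step c c'"
  shows "forest_config c'"
proof -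
  obtain Ops :: "nat set" and nw where "finite Ops" "cV c' = cV c \<union> nw ` Ops"
    using step unfolding growth_step_def by (elim exE conjE) (rule that; assumption)
  then have "finite (cV c')" using assms(1) by (simp add: forest_config_def)
  with assms show ?thesis
    using growth_step_inj_pos[OF step] growth_step_graded_forest[OF _ step] by (simp add: forest_config_def)
qed

lemma forest_config_reachable: "growth_step\<^sup>*\<^sup>* single_node c \<Longrightarrow> forest_config c"
  by (induction rule: rtranclp_induct) (auto intro: forest_config_single_node forest_config_growth_step)

lemma translate_equiv_shape_of:
  assumes "translate_equiv (shape_of c) (V, E)"
  obtains \<tau> where "V = (\<lambda>w. cpos c w + \<tau>) ` cV c" "E = (`) (\<lambda>w. cpos c w + \<tau>) ` cE c"
  using assms unfolding translate_equiv_def shape_of_def by (auto simp: image_image)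

lemma reachable_shape_acyclic:
  assumes reach: "growth_step\<^sup>*\<^sup>* single_node c" and shape: "translate_equiv (shape_of c) (V, E)"
  shows "\<not> has_cycle V E"
proof -
  obtain \<tau> where V: "V = (\<lambda>w. cpos c w + \<tau>) ` cV c" and E: "E = (`) (\<lambda>w. cpos c w + \<tau>) ` cE c"
    using shape by (rule translate_equiv_shape_of)
  have "forest_config c" using reach by (rule forest_config_reachable)
  then have "inj_on (\<lambda>w. cpos c w + \<tau>) (cV c)" "graded_forest (cV c) (cE c)"
    by (auto simp: forest_config_def inj_on_def)
  then have "graded_forest V E"
    unfolding V E by (intro graded_forest_image)
  then show ?thesis by (rule graded_forest_acyclic)
qed

section \<open>Leaves of acyclic graphs\<close>

definition simple_path :: "'a set \<Rightarrow> 'a set set \<Rightarrow> 'a list \<Rightarrow> bool" where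
  "simple_path V E xs \<longleftrightarrow>
     distinct xs \<and> set xs \<subseteq> V \<and> (\<forall>i. Suc i < length xs \<longrightarrow> {xs ! i, xs ! Suc i} \<in> E)"

lemma simple_path_Cons:
  "simple_path V E p \<Longrightarrow> z \<notin> set p \<Longrightarrow> z \<in> V \<Longrightarrow> {z, p ! 0} \<in> E \<Longrightarrow>
    simple_path V E (z # p)"
  unfolding simple_path_def by (auto simp: nth_Cons split: nat.split)

lemma simple_path_closing_cycle:
  assumes p: "simple_path V E p" and j: "2 \<le> j" "j < length p" and closing: "{p ! j, p ! 0} \<in> E"
  shows "has_cycle V E"
  unfolding has_cycle_def
proof (intro exI conjI allI impI)
  let ?c = "take (Suc j) p"
  show "3 \<le> length ?c" "distinct ?c" "set ?c \<subseteq> V"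
    using p j set_take_subset[of "Suc j" p] by (auto simp: simple_path_def)
  fix i assume "i < length ?c"
  then show "{?c ! i, ?c ! (Suc i mod length ?c)} \<in> E"
    using p j closing by (cases "i = j") (auto simp: simple_path_def)
qed

lemma longest_simple_path_starts_at_leaf:
  assumes p: "simple_path V E p" and longest: "\<And>q. simple_path V E q \<Longrightarrow> length q \<le> length p"
    and acyclic: "\<not> has_cycle V E" and "2 \<le> length p"
    and z: "{p ! 0, z} \<in> E" "z \<in> V" "z \<noteq> p ! 0"
  shows "z = p ! 1"
proof (rule ccontr)
  assume "z \<noteq> p ! 1"
  show False
  proof (cases "z \<in> set p")
    case False
    then have "simple_path V E (z # p)"
      using p z by (intro simple_path_Cons) (auto simp: insert_commute)
    then show False using longest by fastforce
  next
    case True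
    then obtain j where j: "j < length p" "p ! j = z" by (metis in_set_conv_nth)
    moreover have "j \<noteq> 0" using j(2) z(3) by (cases j) auto
    moreover have "j \<noteq> 1" using j(2) \<open>z \<noteq> p ! 1\<close> by auto
    ultimately show False
      using simple_path_closing_cycle[OF p, of j] acyclic z(1) by (simp add: insert_commute)
  qed
qed

lemma acyclic_graph_has_leaf:
  assumes fin: "finite V" and conn: "connected_graph V E"
    and edges: "\<forall>e\<in>E. \<exists>p q. e = {p, q} \<and> p \<in> V \<and> q \<in> V \<and> p \<noteq> q"
    and two: "2 \<le> card V" and acyclic: "\<not> has_cycle V E"
  obtains x y where "{x, y} \<in> E" "x \<noteq> y" "\<And>z. {x, z} \<in> E \<Longrightarrow> z = y"
proof -
  have edge: "a \<in> V \<and> b \<in> V \<and> a \<noteq> b" if "{a, b} \<in> E" for a b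
    using edges that by (metis doubleton_eq_iff insert_absorb2)
  obtain a b where ab: "a \<in> V" "b \<in> V" "a \<noteq> b"
    using two card_le_Suc0_iff_eq[OF fin] by (metis not_less_eq_eq numeral_2_eq_2)
  then obtain b' where "(a, b') \<in> edge_rel E"
    using conn unfolding connected_graph_def by (metis converse_rtranclE)
  then have "simple_path V E [a, b']"
    using edge by (auto simp: edge_rel_def simple_path_def)
  moreover have "length q < Suc (card V)" if "simple_path V E q" for q
    using that fin card_mono[of V "set q"] distinct_card[of q] by (auto simp: simple_path_def)
  ultimately obtain p where p: "simple_path V E p"
    and longest: "\<And>q. simple_path V E q \<Longrightarrow> length q \<le> length p"
    using ex_has_greatest_nat[of "simple_path V E" "[a, b']" length "Suc (card V)"] by blast
  have "2 \<le> length p" using longest[OF \<open>simple_path V E [a, b']\<close>] by simp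
  then have first: "{p ! 0, p ! 1} \<in> E" using p by (simp add: simple_path_def)
  show thesis
  proof (rule that[OF first])
    show "p ! 0 \<noteq> p ! 1" using edge[OF first] by blast
    show "z = p ! 1" if "{p ! 0, z} \<in> E" for z
      using longest_simple_path_starts_at_leaf[OF p longest acyclic \<open>2 \<le> length p\<close> that] edge[OF that]
      by blast
  qed
qed

lemma connected_graph_remove_leaf:
  assumes conn: "connected_graph V E" and leaf: "\<And>z. {x, z} \<in> E \<Longrightarrow> z = y"
    and y: "y \<in> V" and "x \<noteq> y"
  shows "connected_graph (V - {x}) (E - {{x, y}})"
proof -
  let ?R = "edge_rel (E - {{x, y}})"
  have from_y: "q = x \<or> (y, q) \<in> ?R\<^sup>*" if "(y, q) \<in> (edge_rel E)\<^sup>*" for q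
    using that
  proof (induction rule: rtrancl_induct)
    case (step q q')
    show ?case
    proof (cases "q = x")
      case True
      then have "q' = y" using step(2) leaf by (simp add: edge_rel_def)
      then show ?thesis by simp
    next
      case False
      then have "q' = x \<or> (q, q') \<in> ?R" using step(2) by (auto simp: edge_rel_def doubleton_eq_iff)
      then show ?thesis using step(3) False by (meson rtrancl_into_rtrancl)
    qed
  qed simp
  have sym: "?R\<inverse> = ?R" by (auto simp: edge_rel_def insert_commute)
  show ?thesis
    unfolding connected_graph_def
  proof (intro ballI)
    fix p q assume "p \<in> V - {x}" "q \<in> V - {x}"
    then have "(y, p) \<in> ?R\<^sup>*" "(y, q) \<in> ?R\<^sup>*"
      using from_y conn y unfolding connected_graph_def by blast+
    then show "(p, q) \<in> ?R\<^sup>*"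
      using rtrancl_converseI[of y p ?R] sym by simp
  qed
qed

lemma has_cycle_mono: "has_cycle V' E' \<Longrightarrow> V' \<subseteq> V \<Longrightarrow> E' \<subseteq> E \<Longrightarrow> has_cycle V E"
  unfolding has_cycle_def by (meson order.trans subsetD)

section \<open>Growing a tree leaf by leaf\<close>

lemma grid_adj_sym: "grid_adj p q \<Longrightarrow> grid_adj q p"
  unfolding grid_adj_def by (simp add: abs_minus_commute)

lemma grid_adj_neq: "grid_adj p q \<Longrightarrow> p \<noteq> q"
  unfolding grid_adj_def by auto

lemma grid_adj_diff_cardinal: "grid_adj p q \<Longrightarrow> p - q \<in> cardinal_dirs"
  unfolding grid_adj_def cardinal_dirs_def
  by (cases p, cases q) (auto simp: abs_if split: if_splits)

lemma is_shape_remove_leaf: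
  assumes shape: "is_shape V E" and xy: "{x, y} \<in> E" "x \<noteq> y"
    and leaf: "\<And>z. {x, z} \<in> E \<Longrightarrow> z = y"
  shows "is_shape (V - {x}) (E - {{x, y}})"
  unfolding is_shape_def
proof (intro conjI)
  have edges: "\<forall>e\<in>E. \<exists>p q. e = {p, q} \<and> p \<in> V \<and> q \<in> V \<and> grid_adj p q"
    using shape by (simp add: is_shape_def)
  then have "y \<in> V" using xy by (metis doubleton_eq_iff)
  then show "finite (V - {x})" "V - {x} \<noteq> {}"
    using shape xy(2) by (auto simp: is_shape_def)
  show "connected_graph (V - {x}) (E - {{x, y}})"
    using shape leaf \<open>y \<in> V\<close> xy(2) by (intro connected_graph_remove_leaf) (auto simp: is_shape_def)
  show "\<forall>e\<in>E - {{x, y}}. \<exists>p q. e = {p, q} \<and> p \<in> V - {x} \<and> q \<in> V - {x} \<and> grid_adj p q"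
  proof
    fix e assume e: "e \<in> E - {{x, y}}"
    then obtain p q where pq: "e = {p, q}" "p \<in> V" "q \<in> V" "grid_adj p q" using edges by blast
    have "p \<noteq> x" "q \<noteq> x"
      using e pq leaf[of q] leaf[of p] by (auto simp: insert_commute)
    then show "\<exists>p q. e = {p, q} \<and> p \<in> V - {x} \<and> q \<in> V - {x} \<and> grid_adj p q"
      using pq by blast
  qed
qed

lemma translate_equiv_insert_edge:
  assumes "V = (\<lambda>p. p + \<tau>) ` W" "E = (`) (\<lambda>p. p + \<tau>) ` F"
  shows "translate_equiv (insert q W, insert {p, q} F) (insert (q + \<tau>) V, insert {p + \<tau>, q + \<tau>} E)"
  using assms unfolding translate_equiv_def by (intro exI[of _ \<tau>]) auto

lemma int_eq_unit_multiple:
  fixes t :: real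
  assumes "u \<in> {-1, 0, 1}" "0 < t" "t \<le> 1" "of_int k = t * of_int u"
  shows "k = u"
proof -
  have "of_int k = t \<or> of_int (- k) = t \<or> k = 0" using assms by auto
  then show ?thesis using assms by auto
qed

lemma traj_meets_grid_point:
  assumes d: "d \<in> cardinal_dirs" and t: "0 < t" "t \<le> 1" and meet: "traj p d t = traj q 0 t"
  shows "q = p + d"
proof -
  have "of_int (fst q - fst p) = t * of_int (fst d)" "of_int (snd q - snd p) = t * of_int (snd d)"
    using meet by (auto simp: traj_def)
  moreover have "fst d \<in> {-1, 0, 1}" "snd d \<in> {-1, 0, 1}"
    using d by (auto simp: cardinal_dirs_def)
  ultimately have "fst q - fst p = fst d" "snd q - snd p = snd d"
    using int_eq_unit_multiple t by blast+
  then show ?thesis by (simp add: prod_eq_iff)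
qed

lemma traj_zero_eqD:
  fixes t :: real
  assumes "traj p 0 t = traj q 0 t"
  shows "p = q"
  using assms by (simp add: traj_def prod_eq_iff)

lemma grid_edge_motion_apart:
  assumes inj: "inj_on pos V" and d: "d \<in> cardinal_dirs" and free: "q + d \<notin> pos ` V"
    and x: "x \<in> insert m V" and y: "y \<in> insert m V" and "x \<noteq> y" and t: "0 < t" "t \<le> 1"
  shows "traj (if x \<in> V then pos x else q) (if x \<in> V then 0 else d) t \<noteq>
    traj (if y \<in> V then pos y else q) (if y \<in> V then 0 else d) t"
proof -
  have moving: "traj q d t \<noteq> traj (pos w) 0 t" if "w \<in> V" for w
    using traj_meets_grid_point[OF d t, of q "pos w"] free that by force
  consider "x \<in> V" "y \<in> V" | "x \<notin> V" "y \<in> V" | "x \<in> V" "y \<notin> V"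
    using x y \<open>x \<noteq> y\<close> by auto
  then show ?thesis
  proof cases
    case 1
    then have "pos x \<noteq> pos y" using inj \<open>x \<noteq> y\<close> by (auto dest: inj_onD)
    then have "traj (pos x) 0 t \<noteq> traj (pos y) 0 t" using traj_zero_eqD by blast
    with 1 show ?thesis by simp
  next
    case 2
    then show ?thesis using moving by simp
  next
    case 3
    then show ?thesis using moving[of x] by (auto dest: sym)
  qed
qed

definition attach_leaf :: "config \<Rightarrow> nat \<Rightarrow> nat \<Rightarrow> point \<Rightarrow> config" where
  "attach_leaf c a m d =
     c\<lparr>cV := insert m (cV c), cpos := (cpos c)(m := cpos c a + d), cE := insert {a, m} (cE c)\<rparr>"

lemma growth_step_attach_leaf:
  assumes inj: "inj_on (cpos c) (cV c)" and a: "a \<in> cV c" and d: "d \<in> cardinal_dirs"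
    and free: "cpos c a + d \<notin> cpos c ` cV c" and m: "m \<notin> cV c"
  shows "growth_step c (attach_leaf c a m d)"
proof -
  have "\<not> has_nbr c a d" using free unfolding has_nbr_def by force
  then have no_ops: "{u \<in> {a}. has_nbr c u d} = {}" by blast
  have disp0: "disp c {a} d w = 0" for w unfolding disp_def no_ops by simp
  have inv_m: "inv_into {a} (\<lambda>_. m) m = a" by (simp add: inv_into_def)
  show ?thesis
    unfolding growth_step_def
  proof (intro exI[of _ d] exI[of _ "{a}"] exI[of _ "\<lambda>_. m"] conjI)
    show "\<forall>w\<in>cV c. cpos (attach_leaf c a m d) w = cpos c w + disp c {a} d w"
      using m by (auto simp: attach_leaf_def disp0)
    show "cE (attach_leaf c a m d) = (cE c - {{u, nbr c u d} | u. u \<in> {a} \<and> has_nbr c u d})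
        \<union> {{u, m} | u. u \<in> {a}} \<union> {{m, nbr c u d} | u. u \<in> {a} \<and> has_nbr c u d}"
      using no_ops by (auto simp: attach_leaf_def)
    show "let start = (\<lambda>w. if w \<in> cV c then cpos c w else cpos c (inv_into {a} (\<lambda>_. m) w));
        move = (\<lambda>w. if w \<in> cV c then disp c {a} d w else disp c {a} d (inv_into {a} (\<lambda>_. m) w) + d)
      in \<forall>x\<in>cV (attach_leaf c a m d). \<forall>y\<in>cV (attach_leaf c a m d). x \<noteq> y \<longrightarrow>
           (\<forall>t::real. 0 < t \<and> t \<le> 1 \<longrightarrow> traj (start x) (move x) t \<noteq> traj (start y) (move y) t)"
      unfolding Let_def
    proof (intro ballI impI allI)
      fix x y and t :: real
      assume "x \<in> cV (attach_leaf c a m d)" "y \<in> cV (attach_leaf c a m d)" "x \<noteq> y" "0 < t \<and> t \<le> 1"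
      with grid_edge_motion_apart[OF inj d free, of x m y t]
      show "traj (if x \<in> cV c then cpos c x else cpos c (inv_into {a} (\<lambda>_. m) x))
          (if x \<in> cV c then disp c {a} d x else disp c {a} d (inv_into {a} (\<lambda>_. m) x) + d) t \<noteq>
        traj (if y \<in> cV c then cpos c y else cpos c (inv_into {a} (\<lambda>_. m) y))
          (if y \<in> cV c then disp c {a} d y else disp c {a} d (inv_into {a} (\<lambda>_. m) y) + d) t"
        by (auto simp: attach_leaf_def disp0 inv_m)
    qed
  qed (use a d m in \<open>auto simp: attach_leaf_def disp0\<close>)
qed

lemma shape_of_attach_leaf:
  assumes m: "m \<notin> cV c" and a: "a \<in> cV c" and edges: "\<And>e. e \<in> cE c \<Longrightarrow> e \<subseteq> cV c"
  shows "shape_of (attach_leaf c a m d) =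
    (insert (cpos c a + d) (fst (shape_of c)), insert {cpos c a, cpos c a + d} (snd (shape_of c)))"
proof -
  let ?c' = "attach_leaf c a m d"
  have old: "cpos ?c' ` e = cpos c ` e" if "e \<subseteq> cV c" for e
    using that m by (auto simp: attach_leaf_def)
  have c': "cV ?c' = insert m (cV c)" "cE ?c' = insert {a, m} (cE c)" "cpos ?c' m = cpos c a + d"
    by (simp_all add: attach_leaf_def)
  then have "cpos ?c' ` cV ?c' = insert (cpos c a + d) (cpos c ` cV c)"
    using old[of "cV c"] by simp
  moreover have "(`) (cpos ?c') ` cE ?c' = insert {cpos c a, cpos c a + d} ((`) (cpos c) ` cE c)"
  proof -
    have "(`) (cpos ?c') ` cE c = (`) (cpos c) ` cE c"
      by (rule image_cong[OF refl]) (rule old[OF edges])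
    moreover have "cpos ?c' ` {a, m} = {cpos c a, cpos c a + d}"
      using a m by (auto simp: attach_leaf_def)
    ultimately show ?thesis using c'(2) by simp
  qed
  ultimately show ?thesis by (simp add: shape_of_def)
qed

lemma single_point_shape:
  assumes "is_shape V E" "card V = 1"
  shows "translate_equiv (shape_of single_node) (V, E)"
proof -
  obtain p where V: "V = {p}" using assms(2) by (rule card_1_singletonE)
  then have "E = {}" using assms(1) grid_adj_neq by (fastforce simp: is_shape_def)
  then show ?thesis
    unfolding translate_equiv_def shape_of_def single_node_def V by (intro exI[of _ p]) (simp add: zero_prod_def)
qed

lemma tree_shape_leaf:
  assumes shape: "is_shape V E" and acyclic: "\<not> has_cycle V E" and two: "2 \<le> card V"
  obtains x y where "{x, y} \<in> E" "grid_adj x y" "x \<in> V" "y \<in> V"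
    "is_shape (V - {x}) (E - {{x, y}})" "\<not> has_cycle (V - {x}) (E - {{x, y}})"
proof -
  have edges: "\<forall>e\<in>E. \<exists>p q. e = {p, q} \<and> p \<in> V \<and> q \<in> V \<and> grid_adj p q"
    using shape by (simp add: is_shape_def)
  have "finite V" "connected_graph V E" using shape by (simp_all add: is_shape_def)
  moreover have "\<forall>e\<in>E. \<exists>p q. e = {p, q} \<and> p \<in> V \<and> q \<in> V \<and> p \<noteq> q"
  proof
    fix e assume "e \<in> E"
    then obtain p q where "e = {p, q}" "p \<in> V" "q \<in> V" "grid_adj p q" using edges by blast
    then show "\<exists>p q. e = {p, q} \<and> p \<in> V \<and> q \<in> V \<and> p \<noteq> q" using grid_adj_neq by blast
  qed
  ultimately obtain x y where xy: "{x, y} \<in> E" "x \<noteq> y" and leaf: "\<And>z. {x, z} \<in> E \<Longrightarrow> z = y"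
    using two acyclic by (rule acyclic_graph_has_leaf) (rule that)
  show thesis
  proof (rule that[OF xy(1)])
    show "grid_adj x y" "x \<in> V" "y \<in> V"
      using edges xy(1) grid_adj_sym by (metis doubleton_eq_iff)+
    show "is_shape (V - {x}) (E - {{x, y}})"
      using shape xy leaf by (rule is_shape_remove_leaf)
    show "\<not> has_cycle (V - {x}) (E - {{x, y}})"
      using acyclic by (meson Diff_subset has_cycle_mono)
  qed
qed

lemma reachable_attach_leaf:
  assumes reach: "growth_step\<^sup>*\<^sup>* single_node c"
    and shape_c: "translate_equiv (shape_of c) (V - {x}, E - {{x, y}})"
    and xy: "{x, y} \<in> E" "grid_adj x y" "x \<in> V" "y \<in> V"
  shows "\<exists>c'. growth_step\<^sup>*\<^sup>* single_node c' \<and> translate_equiv (shape_of c') (V, E)"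
proof -
  have config: "forest_config c" using reach by (rule forest_config_reachable)
  obtain \<tau> where V': "V - {x} = (\<lambda>p. p + \<tau>) ` fst (shape_of c)"
    and E': "E - {{x, y}} = (`) (\<lambda>p. p + \<tau>) ` snd (shape_of c)"
    using shape_c unfolding translate_equiv_def by auto
  have "y \<in> V - {x}" using xy grid_adj_neq by blast
  then obtain a where a: "a \<in> cV c" "y = cpos c a + \<tau>" using V' by (auto simp: shape_of_def)
  define d where "d = x - y"
  have d: "d \<in> cardinal_dirs" using grid_adj_diff_cardinal[OF xy(2)] by (simp add: d_def)
  have x: "x = (cpos c a + d) + \<tau>" using a(2) by (simp add: d_def)
  have free: "cpos c a + d \<notin> cpos c ` cV c"
    using x V' by (force simp: shape_of_def)
  obtain m where m: "m \<notin> cV c"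
    using config infinite_UNIV_nat ex_new_if_finite by (auto simp: forest_config_def)
  have "growth_step c (attach_leaf c a m d)"
    using config a(1) d free m by (intro growth_step_attach_leaf) (simp_all add: forest_config_def)
  moreover have "translate_equiv (shape_of (attach_leaf c a m d)) (V, E)"
  proof -
    have "shape_of (attach_leaf c a m d) =
        (insert (cpos c a + d) (fst (shape_of c)), insert {cpos c a, cpos c a + d} (snd (shape_of c)))"
      using m a(1) config graded_forest_edge_subset by (intro shape_of_attach_leaf) (auto simp: forest_config_def)
    moreover have "V = insert x (V - {x})" "E = insert {y, x} (E - {{x, y}})"
      using xy(1,3) by (auto simp: insert_commute)
    ultimately show ?thesis
      using translate_equiv_insert_edge[OF V' E', of "cpos c a + d" "cpos c a"] x a(2) by simp
  qed
  ultimately show ?thesis using reach by (meson rtranclp.rtrancl_into_rtrancl)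
qed

lemma tree_shape_reachable:
  assumes "is_shape V E" "\<not> has_cycle V E"
  shows "\<exists>c. growth_step\<^sup>*\<^sup>* single_node c \<and> translate_equiv (shape_of c) (V, E)"
  using assms
proof (induction "card V" arbitrary: V E rule: less_induct)
  case less
  show ?case
  proof (cases "card V = 1")
    case True
    then show ?thesis using single_point_shape less.prems(1) by blast
  next
    case False
    moreover have "card V \<noteq> 0" using less.prems(1) by (simp add: is_shape_def)
    ultimately have "2 \<le> card V" by linarith
    with less.prems obtain x y where xy: "{x, y} \<in> E" "grid_adj x y" "x \<in> V" "y \<in> V"
      and smaller: "is_shape (V - {x}) (E - {{x, y}})" "\<not> has_cycle (V - {x}) (E - {{x, y}})"
      by (rule tree_shape_leaf)
    have "finite V" using less.prems(1) by (simp add: is_shape_def)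
    then have "card (V - {x}) < card V" using xy(3) by (rule card_Diff1_less)
    then obtain c where "growth_step\<^sup>*\<^sup>* single_node c"
      "translate_equiv (shape_of c) (V - {x}, E - {{x, y}})"
      using less.hyps smaller by blast
    then show ?thesis using xy by (rule reachable_attach_leaf)
  qed
qed

theorem proposition5p1:
  fixes V :: "point set" and E :: "point set set"
  assumes "is_shape V E"
  shows "(\<exists>c. growth_step\<^sup>*\<^sup>* single_node c \<and> translate_equiv (shape_of c) (V, E))
         \<longleftrightarrow> is_tree V E"
proof
  assume "\<exists>c. growth_step\<^sup>*\<^sup>* single_node c \<and> translate_equiv (shape_of c) (V, E)"
  then obtain c where "growth_step\<^sup>*\<^sup>* single_node c" "translate_equiv (shape_of c) (V, E)"
    by blast
  then have "\<not> has_cycle V E" by (rule reachable_shape_acyclic)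
  with assms show "is_tree V E" by (simp add: is_tree_def is_shape_def)
next
  assume "is_tree V E"
  then have "\<not> has_cycle V E" by (simp add: is_tree_def)
  with assms show "\<exists>c. growth_step\<^sup>*\<^sup>* single_node c \<and> translate_equiv (shape_of c) (V, E)"
    by (rule tree_shape_reachable)
qed

end
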